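(* Let $f(z)=e^z$. If $U,V\subset\mathbb{C}$ are nonempty and open, then there exists $n\geq 0$ such that $f^n(U)\cap V\neq\emptyset$.
   Context: $f^n$ denotes the $n$-th iterate of $f$. *)

theory Defs
  imports "HOL-Analysis.Analysis"
begin

end

theory Submission
  imports Defs "HOL-Complex_Analysis.Complex_Analysis"
begin

text \<open>Every disc \<open>B(a, s)\<close> contains a point with a real iterate. Otherwise all iterates of
  \<open>B(a, s)\<close> avoid the lines \<open>Im z \<in> \<pi>\<int>\<close>, which \<open>exp\<close> maps into \<open>\<real>\<close>; as these lines meet every
  disc of radius 2, Bloch's theorem bounds \<open>|(exp\<^sup>n)'(a)|\<close> by \<open>24/s\<close>. Along the orbit
  \<open>z\<^sub>n = exp\<^sup>n(a)\<close> the ratio \<open>|Im z\<^sub>n| / |(exp\<^sup>n)'(a)|\<close> never increases and shrinks by a fixed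
  factor whenever \<open>|Im z\<^sub>n| \<ge> 1/2\<close>, which happens infinitely often (otherwise \<open>Re z\<^sub>n\<close> drifts to
  \<open>+\<infinity>\<close> and then \<open>|Im z\<^sub>n|\<close> doubles at each step). So the ratio tends to 0 while it is at least
  \<open>s/48\<close> infinitely often.

  Near a real point \<open>x\<close>, \<open>exp\<close> maps \<open>B(x, r)\<close> onto a superset of \<open>B(e\<^sup>x, e\<^sup>x r/2)\<close>, so the
  iterates of a real disc contain real discs that move to \<open>+\<infinity>\<close> while their radius grows to 1.
  For large real \<open>c\<close>, \<open>exp \<circ> exp\<close> maps \<open>B(c, 5)\<close> onto a set containing any prescribed nonzero
  value, and every nonempty open set contains a nonzero value.\<close>

lemma cos_ge_one_minus_square_half: "1 - x\<^sup>2 / 2 \<le> cos (x::real)"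
proof -
  have "(sin (x/2))\<^sup>2 \<le> (x/2)\<^sup>2"
    using abs_sin_x_le_abs_x[of "x/2"] by (metis abs_le_square_iff)
  then show ?thesis using cos_double_sin[of "x/2"] by (simp add: power_divide)
qed

lemma abs_sin_minus_self_le:
  fixes x :: real
  shows "\<bar>sin x - x\<bar> \<le> \<bar>x\<bar> ^ 3 / 6"
  using Maclaurin_sin_bound[of x "Suc (Suc (Suc 0))"]
  by (simp add: sin_coeff_def power3_eq_cube abs_mult_self_eq mult.assoc)

lemma abs_sin_minus_cubic_le:
  fixes x :: real
  shows "\<bar>sin x - (x - x ^ 3 / 6)\<bar> \<le> \<bar>x\<bar> ^ 4 / 24"
  using Maclaurin_sin_bound[of x "Suc (Suc (Suc (Suc 0)))"]
  by (simp add: sin_coeff_def power3_eq_cube power4_eq_xxxx mult.assoc)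

lemma abs_sin_ge_half_abs:
  fixes x :: real
  assumes "\<bar>x\<bar> \<le> 1"
  shows "\<bar>x\<bar> / 2 \<le> \<bar>sin x\<bar>"
proof -
  have "\<bar>x\<bar> ^ 3 \<le> \<bar>x\<bar>" using power_decreasing[of 1 3 "\<bar>x\<bar>"] assms by simp
  moreover have "\<bar>x\<bar> - \<bar>sin x\<bar> \<le> \<bar>sin x - x\<bar>" by (rule abs_triangle_ineq2_sym)
  ultimately show ?thesis using abs_sin_minus_self_le[of x] by linarith
qed

lemma abs_sin_le_contraction:
  fixes x :: real
  assumes "1/2 \<le> \<bar>x\<bar>"
  shows "\<bar>sin x\<bar> \<le> 47/48 * \<bar>x\<bar>"
proof (cases "\<bar>x\<bar> \<le> 2")
  case True
  define t where "t = \<bar>x\<bar>"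
  have t: "1/2 \<le> t" "t \<le> 2" using assms True by (auto simp: t_def)
  have "1/4 * 2 \<le> t\<^sup>2 * (4 - t)"
  proof (rule mult_mono)
    show "1/4 \<le> t\<^sup>2" using power_mono[OF t(1), of 2] by (simp add: power2_eq_square)
  qed (use t in auto)
  then have "t * (1/2) \<le> t * (t\<^sup>2 * (4 - t))" using t by (intro mult_left_mono) auto
  moreover have "\<bar>x - x ^ 3 / 6\<bar> = t * (1 - t\<^sup>2 / 6)"
  proof -
    have "x - x ^ 3 / 6 = x * (1 - x\<^sup>2 / 6)"
      by (simp add: power2_eq_square power3_eq_cube right_diff_distrib)
    moreover have "0 \<le> 1 - t\<^sup>2 / 6" using power_mono[OF t(2), of 2] t by simp
    ultimately show ?thesis by (simp add: abs_mult t_def)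
  qed
  moreover have "\<bar>sin x\<bar> \<le> \<bar>sin x - (x - x ^ 3 / 6)\<bar> + \<bar>x - x ^ 3 / 6\<bar>"
    using abs_triangle_ineq2[of "sin x" "x - x ^ 3 / 6"] by linarith
  moreover have "t * (1 - t\<^sup>2 / 6) + t ^ 4 / 24 = t - t * (t\<^sup>2 * (4 - t)) / 24"
    by (simp add: field_simps power2_eq_square power4_eq_xxxx)
  ultimately show ?thesis using abs_sin_minus_cubic_le[of x] unfolding t_def[symmetric]
    by linarith
next
  case False
  then show ?thesis using abs_sin_le_one[of x] by linarith
qed

lemma affine_le_exp: "x + 1/2 \<le> 4/5 * exp (x::real)"
proof (cases "-2 \<le> x")
  case True
  have "(1 + x/2)\<^sup>2 \<le> exp x" using exp_ge_one_plus_x_over_n_power_n[of 2 x] True by simp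
  moreover have "0 \<le> (x - 1/2)\<^sup>2" by simp
  ultimately show ?thesis by (simp add: power2_eq_square algebra_simps)
next
  case False
  then show ?thesis using exp_gt_zero[of x] by linarith
qed

lemma four_le_exp: "2 \<le> x \<Longrightarrow> 4 \<le> exp (x::real)"
  using exp_ge_one_plus_x_over_n_power_n[of 2 x] power_mono[of 2 "1 + x/2" 2] by simp

lemma abs_Im_exp: "\<bar>Im (exp z)\<bar> = exp (Re z) * \<bar>sin (Im z)\<bar>"
  by (simp add: Im_exp abs_mult)

lemma Re_exp_ge_Re_plus_half:
  assumes "\<bar>Im z\<bar> \<le> 1/2"
  shows "Re z + 1/2 \<le> Re (exp z)"
proof -
  have "(Im z)\<^sup>2 \<le> 1/4" using assms abs_le_square_iff[of "Im z" "1/2"] by (simp add: power2_eq_square)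
  then have "4/5 \<le> cos (Im z)" using cos_ge_one_minus_square_half[of "Im z"] by linarith
  then have "exp (Re z) * (4/5) \<le> Re (exp z)" by (simp add: Re_exp)
  then show ?thesis using affine_le_exp[of "Re z"] by simp
qed

lemma abs_Im_exp_ge_double:
  assumes "2 \<le> Re z" and "\<bar>Im z\<bar> \<le> 1"
  shows "2 * \<bar>Im z\<bar> \<le> \<bar>Im (exp z)\<bar>"
proof -
  have "4 * (\<bar>Im z\<bar> / 2) \<le> exp (Re z) * \<bar>sin (Im z)\<bar>"
    using four_le_exp[OF assms(1)] abs_sin_ge_half_abs[OF assms(2)] by (intro mult_mono) auto
  then show ?thesis by (simp add: abs_Im_exp)
qed

lemma frequently_abs_Im_exp_iterate_ge_half:
  fixes a :: complex
  assumes off_real: "\<And>k. Im ((exp ^^ k) a) \<noteq> 0"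
  shows "\<exists>\<^sub>F k in sequentially. 1/2 \<le> \<bar>Im ((exp ^^ k) a)\<bar>"
proof (rule ccontr)
  define z where "z k = (exp ^^ k) a" for k
  have z_Suc: "z (Suc k) = exp (z k)" for k by (simp add: z_def)
  assume "\<not> ?thesis"
  then obtain N where small: "\<And>k. N \<le> k \<Longrightarrow> \<bar>Im (z k)\<bar> < 1/2"
    by (force simp: not_frequently eventually_sequentially z_def not_le)
  have drift: "Re (z N) + real j / 2 \<le> Re (z (N + j))" for j
  proof (induction j)
    case (Suc j)
    have "Re (z (N + j)) + 1/2 \<le> Re (z (N + Suc j))"
      using Re_exp_ge_Re_plus_half[of "z (N + j)"] small[of "N + j"] by (simp add: z_Suc)
    with Suc.IH show ?case by (simp add: add_divide_distrib)
  qed simp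
  obtain j :: nat where "2 * (2 - Re (z N)) \<le> real j" using real_arch_simple by blast
  define K where "K = N + j"
  have Re_large: "2 \<le> Re (z (K + i))" for i
    using drift[of "j + i"] \<open>2 * (2 - Re (z N)) \<le> real j\<close> of_nat_0_le_iff[of i, where 'a=real]
    unfolding K_def add.assoc of_nat_add by argo
  have Im_grows: "2 ^ i * \<bar>Im (z K)\<bar> \<le> \<bar>Im (z (K + i))\<bar>" for i
  proof (induction i)
    case (Suc i)
    have "2 * \<bar>Im (z (K + i))\<bar> \<le> \<bar>Im (z (K + Suc i))\<bar>"
      using abs_Im_exp_ge_double[OF Re_large[of i]] small[of "K + i"] by (simp add: z_Suc K_def)
    with Suc.IH show ?case by simp
  qed simp
  have "0 < \<bar>Im (z K)\<bar>" using off_real by (simp add: z_def)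
  then obtain i where "1 / (2 * \<bar>Im (z K)\<bar>) < 2 ^ i" using real_arch_pow[of "2::real"] by auto
  then have "1/2 < 2 ^ i * \<bar>Im (z K)\<bar>" using \<open>0 < \<bar>Im (z K)\<bar>\<close> by (simp add: field_simps)
  then show False using Im_grows[of i] small[of "K + i"] by (simp add: K_def)
qed

lemma decseq_tendsto_zero_if_frequently_contracting:
  fixes R :: "nat \<Rightarrow> real"
  assumes "decseq R" and "\<And>k. 0 \<le> R k" and "0 \<le> q" "q < 1"
    and "\<exists>\<^sub>F k in sequentially. R (Suc k) \<le> q * R k"
  shows "R \<longlonglongrightarrow> 0"
proof -
  have below: "\<exists>m. R m \<le> q ^ N * R 0" for N
  proof (induction N)
    case 0
    show ?case by auto
  next
    case (Suc N)
    then obtain m where "R m \<le> q ^ N * R 0" by blast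
    moreover obtain k where "m \<le> k" "R (Suc k) \<le> q * R k"
      using assms(5) by (auto simp: frequently_sequentially)
    moreover have "R k \<le> R m" using \<open>decseq R\<close> \<open>m \<le> k\<close> by (simp add: decseq_def)
    ultimately have "R (Suc k) \<le> q * (q ^ N * R 0)"
      using \<open>0 \<le> q\<close> by (meson mult_left_mono order_trans)
    then show ?case by (metis mult.assoc power_Suc)
  qed
  show ?thesis
  proof (rule LIMSEQ_I)
    fix e :: real
    assume "0 < e"
    have "(\<lambda>N. q ^ N * R 0) \<longlonglongrightarrow> 0"
      using assms(3,4) by (intro tendsto_mult_left_zero LIMSEQ_power_zero) simp
    from order_tendstoD(2)[OF this \<open>0 < e\<close>] obtain N where "q ^ N * R 0 < e"
      by (auto simp: eventually_sequentially)
    then obtain m where "R m < e" using below[of N] by (metis order.strict_trans1)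
    then have "\<forall>n\<ge>m. norm (R n - 0) < e"
      using \<open>decseq R\<close> assms(2) by (auto simp: decseq_def intro: le_less_trans)
    then show "\<exists>m. \<forall>n\<ge>m. norm (R n - 0) < e" by blast
  qed
qed

lemma has_field_derivative_funpow:
  assumes "\<And>z. (f has_field_derivative f' z) (at z)"
  shows "((f ^^ m) has_field_derivative (\<Prod>k<m. f' ((f ^^ k) z))) (at z)"
proof (induction m)
  case (Suc m)
  have "((f \<circ> (f ^^ m)) has_field_derivative f' ((f ^^ m) z) * (\<Prod>k<m. f' ((f ^^ k) z))) (at z)"
    by (rule DERIV_chain[OF assms Suc.IH])
  then show ?case by (simp add: o_def mult.commute)
qed (simp add: id_def)

lemma holomorphic_on_exp_funpow: "(exp ^^ m) holomorphic_on S"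
  using has_field_derivative_funpow[OF DERIV_exp]
  by (meson field_differentiable_def field_differentiable_at_within holomorphic_on_def)

lemma norm_deriv_exp_funpow:
  "norm (deriv (exp ^^ m) a) = (\<Prod>k<m. exp (Re ((exp ^^ k) a)))"
  using has_field_derivative_funpow[OF DERIV_exp, of m a]
  by (simp add: DERIV_imp_deriv prod_norm[symmetric])

lemma ball_two_meets_real_exp_preimage: "\<exists>p \<in> ball b 2. Im (exp p) = 0"
proof
  define n where "n = round (Im b / pi)"
  define p where "p = Complex (Re b) (pi * of_int n)"
  show "Im (exp p) = 0"
    by (simp add: p_def Im_exp mult.commute sin_times_pi_eq_0)
  have "\<bar>of_int n - Im b / pi\<bar> \<le> 1/2" unfolding n_def by (rule of_int_round_abs_le)
  then have "\<bar>Im b - pi * of_int n\<bar> \<le> pi / 2"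
    by (simp add: abs_minus_commute abs_mult[symmetric] field_simps abs_divide)
  then have "\<bar>Im b - pi * of_int n\<bar> < 2" using pi_less_4 by linarith
  then show "p \<in> ball b 2" by (simp add: p_def dist_norm norm_complex_def)
qed

lemma norm_deriv_le_if_exp_image_not_real:
  assumes "f holomorphic_on ball a s" and "0 < s"
    and "\<And>w. w \<in> ball a s \<Longrightarrow> Im (exp (f w)) \<noteq> 0"
  shows "norm (deriv f a) \<le> 24 / s"
proof (rule ccontr)
  assume "\<not> ?thesis"
  then have "2 \<le> s * norm (deriv f a) / 12" using \<open>0 < s\<close> by (simp add: field_simps)
  then obtain b where "ball b 2 \<subseteq> f ` ball a s" using Bloch[OF assms(1,2)] by blast
  then show False using ball_two_meets_real_exp_preimage[of b] assms(3) by blast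
qed

lemma norm_deriv_exp_funpow_le_if_off_real:
  fixes a :: complex
  assumes "0 < s" and "\<And>m w. w \<in> ball a s \<Longrightarrow> Im ((exp ^^ m) w) \<noteq> 0"
  shows "(\<Prod>j<k. exp (Re ((exp ^^ j) a))) \<le> 24 / s"
proof -
  have "norm (deriv (exp ^^ k) a) \<le> 24 / s"
    using assms(2)[of _ "Suc k"] \<open>0 < s\<close>
    by (intro norm_deriv_le_if_exp_image_not_real holomorphic_on_exp_funpow) auto
  then show ?thesis by (simp add: norm_deriv_exp_funpow)
qed

lemma exp_iterate_ball_meets_real:
  fixes a :: complex
  assumes "0 < s"
  shows "\<exists>m. \<exists>w \<in> ball a s. Im ((exp ^^ m) w) = 0"
proof (rule ccontr)
  assume "\<not> ?thesis"
  then have off_real: "\<And>m w. w \<in> ball a s \<Longrightarrow> Im ((exp ^^ m) w) \<noteq> 0" by blast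
  define z where "z k = (exp ^^ k) a" for k
  define D where "D k = (\<Prod>j<k. exp (Re (z j)))" for k
  define R where "R k = \<bar>Im (z k)\<bar> / D k" for k
  have D_pos: "0 < D k" for k by (simp add: D_def prod_pos)
  have D_bound: "D k \<le> 24 / s" for k
    using norm_deriv_exp_funpow_le_if_off_real[OF \<open>0 < s\<close> off_real] by (simp add: D_def z_def)
  have R_Suc: "R (Suc k) = \<bar>sin (Im (z k))\<bar> / D k" for k
    by (simp add: R_def D_def z_def abs_Im_exp)
  have "decseq R"
  proof (rule decseq_SucI)
    show "R (Suc k) \<le> R k" for k
      unfolding R_Suc using abs_sin_x_le_abs_x[of "Im (z k)"] D_pos[of k]
      by (simp add: R_def divide_right_mono)
  qed
  have large: "\<exists>\<^sub>F k in sequentially. 1/2 \<le> \<bar>Im (z k)\<bar>"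
    using frequently_abs_Im_exp_iterate_ge_half[of a] off_real[of a] \<open>0 < s\<close> by (simp add: z_def)
  then have "\<exists>\<^sub>F k in sequentially. R (Suc k) \<le> 47/48 * R k"
  proof (rule frequently_elim1)
    fix k
    assume "1/2 \<le> \<bar>Im (z k)\<bar>"
    then have "\<bar>sin (Im (z k))\<bar> / D k \<le> (47/48 * \<bar>Im (z k)\<bar>) / D k"
      using abs_sin_le_contraction D_pos[of k] by (intro divide_right_mono) auto
    then show "R (Suc k) \<le> 47/48 * R k" unfolding R_Suc by (simp add: R_def)
  qed
  moreover have "0 \<le> R k" for k
    using D_pos[of k] by (simp add: R_def)
  ultimately have "R \<longlonglongrightarrow> 0"
    using \<open>decseq R\<close> by (intro decseq_tendsto_zero_if_frequently_contracting[where q = "47/48"]) auto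
  then have "\<forall>\<^sub>F k in sequentially. R k < s / 48"
    using \<open>0 < s\<close> by (intro order_tendstoD(2)) auto
  then obtain k where "R k < s / 48" and "1/2 \<le> \<bar>Im (z k)\<bar>"
    using frequently_ex[OF frequently_eventually_conj[OF large]] by blast
  moreover have "(1/2) / (24 / s) \<le> R k"
    unfolding R_def using \<open>1/2 \<le> \<bar>Im (z k)\<bar>\<close> D_pos[of k] D_bound[of k]
    by (metis abs_ge_zero frac_le)
  ultimately show False by simp
qed

lemma open_image_exp:
  fixes S :: "complex set"
  assumes "open S"
  shows "open (exp ` S)"
proof (rule open_mapping_thm[of exp UNIV])
  show "\<not> exp constant_on (UNIV :: complex set)"
  proof
    assume "exp constant_on (UNIV :: complex set)"
    then have "exp 0 = exp (ln 2 :: complex)" unfolding constant_on_def by (metis UNIV_I)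
    then show False by simp
  qed
qed (use assms in \<open>auto simp: holomorphic_on_exp\<close>)

lemma open_image_funpow:
  fixes f :: "'a::topological_space \<Rightarrow> 'a"
  assumes "\<And>S. open S \<Longrightarrow> open (f ` S)" and "open S"
  shows "open ((f ^^ n) ` S)"
  using assms(2)
proof (induction n arbitrary: S)
  case (Suc n)
  have "(f ^^ Suc n) ` S = (f ^^ n) ` f ` S"
    by (simp add: funpow_Suc_right image_comp del: funpow.simps)
  then show ?case using Suc assms(1) by simp
qed simp

lemma ball_subset_image_exp:
  fixes z :: complex
  assumes "0 < r" and "r \<le> 1"
  shows "ball (exp z) (norm (exp z) * r / 2) \<subseteq> exp ` ball z r"
proof
  fix w
  assume "w \<in> ball (exp z) (norm (exp z) * r / 2)"
  then have "norm (w - exp z) < norm (exp z) * r / 2" by (simp add: dist_norm norm_minus_commute)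
  define u where "u = w / exp z - 1"
  have "u = (w - exp z) / exp z" by (simp add: u_def diff_divide_distrib)
  then have "norm u = norm (w - exp z) / norm (exp z)" by (simp add: norm_divide)
  then have "norm u < r / 2"
    using \<open>norm (w - exp z) < norm (exp z) * r / 2\<close> by (simp add: divide_less_eq mult.commute)
  then have "norm (ln (1 + u)) < r"
    using norm_Ln_le[of u] \<open>r \<le> 1\<close> by linarith
  moreover have "exp (z + ln (1 + u)) = w"
  proof -
    have "1 + u \<noteq> 0" using \<open>norm u < r / 2\<close> \<open>r \<le> 1\<close> by (auto simp: add_eq_0_iff)
    then show ?thesis by (simp add: exp_add u_def)
  qed
  ultimately show "w \<in> exp ` ball z r" by (intro rev_image_eqI[of "z + ln (1 + u)"]) (auto simp: dist_norm)
qed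

definition iterates_cover :: "complex \<Rightarrow> real \<Rightarrow> complex \<Rightarrow> real \<Rightarrow> bool" where
  "iterates_cover a r b s \<longleftrightarrow> (\<exists>k. ball b s \<subseteq> (exp ^^ k) ` ball a r)"

lemma iterates_cover_refl: "iterates_cover a r a r"
  unfolding iterates_cover_def by (rule exI[of _ 0]) simp

lemma iterates_cover_trans:
  assumes "iterates_cover a r b s" and "iterates_cover b s c t"
  shows "iterates_cover a r c t"
proof -
  obtain k l where "ball b s \<subseteq> (exp ^^ k) ` ball a r" and "ball c t \<subseteq> (exp ^^ l) ` ball b s"
    using assms by (auto simp: iterates_cover_def)
  then have "ball c t \<subseteq> (exp ^^ l) ` (exp ^^ k) ` ball a r"
    by (meson image_mono order_trans)
  then have "ball c t \<subseteq> (exp ^^ (l + k)) ` ball a r"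
    by (simp add: funpow_add image_comp)
  then show ?thesis by (auto simp: iterates_cover_def)
qed

lemma iterates_cover_mono:
  assumes "iterates_cover a r b s" and "r \<le> r'"
  shows "iterates_cover a r' b s"
proof -
  obtain k where "ball b s \<subseteq> (exp ^^ k) ` ball a r"
    using assms(1) by (auto simp: iterates_cover_def)
  also have "\<dots> \<subseteq> (exp ^^ k) ` ball a r'"
    using assms(2) by (intro image_mono subset_ball)
  finally show ?thesis by (auto simp: iterates_cover_def)
qed

lemma iterates_cover_exp:
  assumes "0 < r" and "r \<le> 1" and "s \<le> norm (exp a) * r / 2"
  shows "iterates_cover a r (exp a) s"
proof -
  have "ball (exp a) s \<subseteq> exp ` ball a r"
    using ball_subset_image_exp[OF assms(1,2), of a] subset_ball[OF assms(3)] by (meson order_trans)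
  then have "ball (exp a) s \<subseteq> (exp ^^ 1) ` ball a r" by simp
  then show ?thesis unfolding iterates_cover_def by blast
qed

lemma iterates_cover_real_shift:
  assumes "0 < r" and "r \<le> 1"
  shows "\<exists>x' r'. x + real N \<le> x' \<and> 0 < r' \<and> r' \<le> 1 \<and> iterates_cover (of_real x) r (of_real x') r'"
  using assms
proof (induction N arbitrary: x r)
  case 0
  then show ?case using iterates_cover_refl by auto
next
  case (Suc N)
  define r1 where "r1 = min 1 (exp x * r / 2)"
  have step: "iterates_cover (of_real x) r (of_real (exp x)) r1"
    using iterates_cover_exp[where a = "of_real x" and s = r1] Suc.prems by (simp add: r1_def exp_of_real)
  obtain x' r' where "exp x + real N \<le> x'" "0 < r'" "r' \<le> 1"
    and rest: "iterates_cover (of_real (exp x)) r1 (of_real x') r'"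
    using Suc.IH[where x = "exp x" and r = r1] Suc.prems by (auto simp: r1_def)
  moreover have "x + real (Suc N) \<le> x'"
    using \<open>exp x + real N \<le> x'\<close> exp_ge_add_one_self[of x] by linarith
  ultimately show ?case using iterates_cover_trans[OF step rest] by blast
qed

lemma iterates_cover_real_grow:
  assumes "2 \<le> x" and "0 < r" and "r \<le> 1"
  shows "\<exists>x'. x + real N \<le> x' \<and> iterates_cover (of_real x) r (of_real x') (min 1 (2 ^ N * r))"
  using assms
proof (induction N arbitrary: x r)
  case 0
  then show ?case using iterates_cover_refl by auto
next
  case (Suc N)
  define r1 where "r1 = min 1 (2 * r)"
  have "4 * r \<le> exp x * r"
    using four_le_exp[OF \<open>2 \<le> x\<close>] \<open>0 < r\<close> by (intro mult_right_mono) auto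
  then have "r1 \<le> exp x * r / 2" by (simp add: r1_def min_le_iff_disj)
  then have step: "iterates_cover (of_real x) r (of_real (exp x)) r1"
    using iterates_cover_exp[where a = "of_real x" and s = r1] Suc.prems by (simp add: exp_of_real)
  obtain x' where "exp x + real N \<le> x'"
    and rest: "iterates_cover (of_real (exp x)) r1 (of_real x') (min 1 (2 ^ N * r1))"
    using Suc.IH[where x = "exp x" and r = r1] Suc.prems four_le_exp[of x] by (auto simp: r1_def)
  moreover have "min 1 (2 ^ N * r1) = min 1 (2 ^ Suc N * r)"
  proof -
    have "2 * r \<le> 2 ^ N * (2 * r)"
      using mult_right_mono[OF one_le_power[of "2::real" N], of "2 * r"] \<open>0 < r\<close> by simp
    then show ?thesis using one_le_power[of "2::real" N] by (auto simp: r1_def min_def algebra_simps)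
  qed
  moreover have "x + real (Suc N) \<le> x'"
    using \<open>exp x + real N \<le> x'\<close> exp_ge_add_one_self[of x] by linarith
  ultimately show ?case using iterates_cover_trans[OF step rest] by metis
qed

lemma iterates_cover_real_far_unit_ball:
  assumes "0 < r"
  shows "\<exists>y. T \<le> y \<and> iterates_cover (of_real x) r (of_real y) 1"
proof -
  obtain N1 :: nat where "2 - x \<le> real N1" using real_arch_simple by blast
  obtain x1 r1 where "x + real N1 \<le> x1" "0 < r1" "r1 \<le> 1"
    and cover1: "iterates_cover (of_real x) (min 1 r) (of_real x1) r1"
    using iterates_cover_real_shift[of "min 1 r" x N1] \<open>0 < r\<close> by auto
  with \<open>2 - x \<le> real N1\<close> have "2 \<le> x1" by linarith
  obtain N2 :: nat where N2: "\<bar>T\<bar> + 1 / r1 \<le> real N2" using real_arch_simple by blast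
  have "0 < 1 / r1" using \<open>0 < r1\<close> by simp
  then have "T \<le> N2" and "1 / r1 < 2 ^ N2"
    using N2 of_nat_less_two_power[of N2, where 'a = real] by linarith+
  then have "1 \<le> 2 ^ N2 * r1" using \<open>0 < r1\<close> by (simp add: field_simps)
  then obtain y where "x1 + real N2 \<le> y" and cover2: "iterates_cover (of_real x1) r1 (of_real y) 1"
    using iterates_cover_real_grow[of x1 r1 N2] \<open>2 \<le> x1\<close> \<open>0 < r1\<close> \<open>r1 \<le> 1\<close> by auto
  moreover have "T \<le> y" using \<open>x1 + real N2 \<le> y\<close> \<open>2 \<le> x1\<close> \<open>T \<le> N2\<close> by linarith
  moreover have "iterates_cover (of_real x) r (of_real x1) r1"
    using cover1 by (rule iterates_cover_mono) simp
  ultimately show ?thesis using iterates_cover_trans by blast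
qed

lemma exp_preimage_norm_between:
  fixes v :: complex and c :: real
  assumes "v \<noteq> 0" and "2 * (2 * pi + norm (ln v)) \<le> exp c"
  shows "\<exists>w. exp w = v \<and> exp (c - 1) \<le> norm w \<and> norm w \<le> exp (c + 1)"
proof -
  define A where "A = exp c"
  define n where "n = \<lfloor>A / (2 * pi)\<rfloor>"
  define w where "w = ln v + \<i> * (of_int n * (of_real pi * 2))"
  have "real_of_int n \<le> A / (2 * pi)" "A / (2 * pi) < real_of_int n + 1"
    by (simp_all add: n_def)
  then have n_bounds: "2 * pi * n \<le> A" "A - 2 * pi < 2 * pi * n"
    using pi_gt_zero by (simp_all add: field_simps)
  have "0 \<le> n" by (simp add: n_def A_def)
  then have "norm (\<i> * (of_int n * (of_real pi * 2))) = 2 * pi * n"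
    by (simp add: norm_mult)
  then have "2 * pi * n - norm (ln v) \<le> norm w" and "norm w \<le> 2 * pi * n + norm (ln v)"
    using norm_triangle_ineq2[of "\<i> * (of_int n * (of_real pi * 2))" "- ln v"]
      norm_triangle_ineq[of "ln v" "\<i> * (of_int n * (of_real pi * 2))"]
    by (simp_all add: w_def add.commute)
  then have "A / 2 \<le> norm w" and "norm w \<le> 2 * A"
    using n_bounds assms(2) pi_gt_zero norm_ge_zero[of "ln v"] by (simp_all add: A_def)
  moreover have "exp (c - 1) \<le> A / 2" and "2 * A \<le> exp (c + 1)"
    using exp_ge_add_one_self[of 1] by (simp_all add: A_def exp_diff exp_add field_simps)
  moreover have "exp w = v" using assms(1) by (simp add: w_def)
  ultimately show ?thesis by fastforce
qed

lemma Ln_mem_ball_five: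
  fixes w :: complex and c :: real
  assumes "exp (c - 1) \<le> norm w" and "norm w \<le> exp (c + 1)"
  shows "ln w \<in> ball (of_real c) 5"
proof -
  have "w \<noteq> 0" using assms(1) exp_gt_zero[of "c - 1"] by auto
  then have "c - 1 \<le> Re (ln w)" and "Re (ln w) \<le> c + 1"
    using assms by (metis Re_Ln exp_le_cancel_iff exp_ln zero_less_norm_iff)+
  moreover have "\<bar>Im (ln w)\<bar> \<le> pi"
    using mpi_less_Im_Ln[OF \<open>w \<noteq> 0\<close>] Im_Ln_le_pi[OF \<open>w \<noteq> 0\<close>] by linarith
  moreover have "norm (ln w - of_real c) \<le> \<bar>Re (ln w) - c\<bar> + \<bar>Im (ln w)\<bar>"
    using cmod_le[of "ln w - of_real c"] by simp
  ultimately have "norm (ln w - of_real c) < 5" using pi_less_4 by linarith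
  then show ?thesis by (simp add: dist_norm norm_minus_commute)
qed

lemma mem_image_exp_exp_ball:
  fixes v :: complex and c :: real
  assumes "v \<noteq> 0" and "2 * (2 * pi + norm (ln v)) \<le> exp c"
  shows "v \<in> (exp ^^ 2) ` ball (of_real c) 5"
proof -
  obtain w where "exp w = v" and "exp (c - 1) \<le> norm w" and "norm w \<le> exp (c + 1)"
    using exp_preimage_norm_between[OF assms] by blast
  moreover have "w \<noteq> 0" using \<open>exp (c - 1) \<le> norm w\<close> exp_gt_zero[of "c - 1"] by auto
  ultimately show ?thesis
    using Ln_mem_ball_five by (intro rev_image_eqI[of "ln w"]) (auto simp: numeral_2_eq_2)
qed

lemma exp_iterate_real_ball_covers_nonzero:
  fixes v :: complex and x r :: real
  assumes "v \<noteq> 0" and "0 < r"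
  shows "\<exists>n. v \<in> (exp ^^ n) ` ball (of_real x) r"
proof -
  define T where "T = 10 + 2 * (2 * pi + norm (ln v))"
  obtain y where "T \<le> y" and cover: "iterates_cover (of_real x) r (of_real y) 1"
    using iterates_cover_real_far_unit_ball[OF \<open>0 < r\<close>] by blast
  then have "10 \<le> exp y"
    using exp_ge_add_one_self[of y] pi_gt_zero norm_ge_zero[of "ln v"] unfolding T_def by argo
  then have "iterates_cover (of_real y) 1 (of_real (exp y)) 5"
    using iterates_cover_exp[where a = "of_real y" and r = 1 and s = 5] by (simp add: exp_of_real)
  then have "iterates_cover (of_real x) r (of_real (exp y)) 5"
    by (rule iterates_cover_trans[OF cover])
  then obtain k where k: "ball (of_real (exp y)) 5 \<subseteq> (exp ^^ k) ` ball (of_real x :: complex) r"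
    unfolding iterates_cover_def by blast
  have "2 * (2 * pi + norm (ln v)) \<le> exp (exp y)"
    using \<open>T \<le> y\<close> exp_ge_add_one_self[of y] exp_ge_add_one_self[of "exp y"]
    unfolding T_def by argo
  then have "v \<in> (exp ^^ 2) ` ball (of_real (exp y)) 5"
    by (rule mem_image_exp_exp_ball[OF \<open>v \<noteq> 0\<close>])
  also have "\<dots> \<subseteq> (exp ^^ 2) ` (exp ^^ k) ` ball (of_real x) r"
    using k by (rule image_mono)
  also have "\<dots> = (exp ^^ (2 + k)) ` ball (of_real x) r"
    by (simp only: funpow_add image_comp)
  finally show ?thesis by blast
qed

theorem mainTheorem8:
  fixes U V :: "complex set"
  assumes "open U" and "U \<noteq> {}" and "open V" and "V \<noteq> {}"
  shows "\<exists>n::nat. ((exp :: complex \<Rightarrow> complex) ^^ n) ` U \<inter> V \<noteq> {}"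
proof -
  obtain a s where "0 < s" and "ball a s \<subseteq> U"
    using assms(1,2) by (meson ex_in_conv openE)
  have "V \<noteq> {0}" using assms(3) not_open_singleton[of "0::complex"] by blast
  then obtain v where "v \<in> V" and "v \<noteq> 0" using assms(4) by blast
  obtain m w where "w \<in> ball a s" and "Im ((exp ^^ m) w) = 0"
    using exp_iterate_ball_meets_real[OF \<open>0 < s\<close>] by blast
  then have "of_real (Re ((exp ^^ m) w)) \<in> (exp ^^ m) ` ball a s"
    by (intro rev_image_eqI[of w]) (simp_all add: complex_eq_iff)
  moreover have "open ((exp ^^ m) ` ball a s)"
    using open_image_funpow[OF open_image_exp open_ball] by blast
  ultimately obtain r where "0 < r" and r: "ball (of_real (Re ((exp ^^ m) w))) r \<subseteq> (exp ^^ m) ` ball a s"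
    by (meson openE)
  obtain n where "v \<in> (exp ^^ n) ` ball (of_real (Re ((exp ^^ m) w))) r"
    using exp_iterate_real_ball_covers_nonzero[OF \<open>v \<noteq> 0\<close> \<open>0 < r\<close>] by blast
  also have "\<dots> \<subseteq> (exp ^^ n) ` (exp ^^ m) ` U"
    using r \<open>ball a s \<subseteq> U\<close> by (meson image_mono order_trans)
  also have "\<dots> = (exp ^^ (n + m)) ` U"
    by (simp only: funpow_add image_comp)
  finally show ?thesis using \<open>v \<in> V\<close> by blast
qed

end
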